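(* Assume there exist constants $\beta>1$ and $C_1,C_2>0$ such that $C_1(\log\frac1x)^{\beta-1}dx\le\Lambda(dx)\le C_2(\log\frac1x)^{\beta-1}dx$ on $(0,1)$. Then for every $\delta\in(0,1)$, as $n\to\infty$, $$\sum_{k=\lfloor\delta n\rfloor+1}^n\binom nk\lambda_{n,k}\le\frac{C_2}{\beta}\delta^{-\beta}+O(n^{-1}).$$
   Context: $\Lambda$ is a finite measure on $[0,1]$; for $2\le k\le n$, $\lambda_{n,k}=\int_{[0,1]}x^{k-2}(1-x)^{n-k}\Lambda(dx)$. $\lfloor x\rfloor$ is the integer part of $x$. *)

theory Defs
  imports "HOL-Analysis.Analysis"
begin

definition lam :: "real measure \<Rightarrow> nat \<Rightarrow> nat \<Rightarrow> real" where
  "lam \<Lambda> n k = (LINT x:{0..1}|\<Lambda>. x ^ (k - 2) * (1 - x) ^ (n - k))"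

end

theory Submission imports Defs "HOL-Real_Asymp.Real_Asymp" begin

text \<open>Since \<open>ln (1/x) \<le> 1/x\<close>, the measure \<open>\<Lambda>\<close> is dominated by \<open>C\<^sub>2 x\<^sup>1\<^sup>-\<^sup>\<beta> dx\<close> on \<open>(0,1)\<close>,
  so \<open>\<lambda>\<^sub>n\<^sub>,\<^sub>k \<le> C\<^sub>2 B(k - \<beta>, n + 1 - k)\<close>. Multiplied by \<open>n choose k\<close> these Beta values telescope:
  with \<open>g j = \<Gamma>(j - \<beta>) / \<Gamma>(j)\<close> and \<open>Q = \<Gamma>(n + 1) / \<Gamma>(n + 1 - \<beta>)\<close> one has
  \<open>(n choose k) B(k - \<beta>, n + 1 - k) = Q (g k - g (k + 1)) / \<beta>\<close> and \<open>Q g (n + 1) = 1\<close>, so the sum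
  over \<open>k \<ge> m\<close> is \<open>C\<^sub>2 (Q g m - 1) / \<beta>\<close>. Log-convexity of \<open>\<Gamma>\<close> bounds \<open>Q g m\<close> by
  \<open>((n + 1) / (m - \<beta> - 1))\<^sup>\<beta>\<close>, which tends to \<open>\<delta>\<^sup>-\<^sup>\<beta>\<close> for \<open>m = \<lfloor>\<delta> n\<rfloor> + 1\<close>; the \<open>-1\<close> absorbs the
  error, so the bound holds eventually even with \<open>K = 0\<close>.\<close>

lemma convex_on_chord_slope_mono:
  fixes f :: "real \<Rightarrow> real"
  assumes f: "convex_on I f" and I: "x \<in> I" "y \<in> I" "z \<in> I" "w \<in> I"
    and order: "x < y" "y \<le> z" "z < w"
  shows "(f y - f x) / (y - x) \<le> (f w - f z) / (w - z)"
proof -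
  have "(f x - f y) / (x - y) \<le> (f x - f w) / (x - w)"
    using convex_on_slope_le(1)[OF f I(1) I(4), of y] order by auto
  also have "\<dots> \<le> (f y - f w) / (y - w)"
    using convex_on_slope_le(2)[OF f I(1) I(4), of y] order by auto
  also have "\<dots> \<le> (f z - f w) / (z - w)"
    using convex_on_slope_le(2)[OF f I(2) I(4), of z] order by (cases "y = z") auto
  finally show ?thesis
    by (metis minus_diff_eq minus_divide_divide)
qed

lemma Gamma_real_plus1: "(x::real) > 0 \<Longrightarrow> Gamma (x + 1) = x * Gamma x"
  by (rule Gamma_plus1) (auto elim!: nonpos_Ints_cases)

lemma ln_Gamma_succ_diff:
  fixes x :: real assumes "x > 0"
  shows "ln (Gamma (x + 1)) - ln (Gamma x) = ln x"
proof -
  have "Gamma x > 0" using assms by simp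
  then show ?thesis
    using assms by (simp add: Gamma_real_plus1 ln_mult_pos)
qed

lemma ln_Gamma_increment_le:
  fixes a b :: real assumes a: "a > 0" and b: "b > 0"
  shows "ln (Gamma (a + b)) - ln (Gamma a) \<le> b * ln (a + b)"
proof -
  let ?f = "ln \<circ> Gamma :: real \<Rightarrow> real"
  have "(?f (a + b) - ?f a) / ((a + b) - a) \<le> (?f (a + b + 1) - ?f (a + b)) / ((a + b + 1) - (a + b))"
    by (rule convex_on_chord_slope_mono[OF log_convex_Gamma_real]) (use a b in auto)
  then show ?thesis
    using a b ln_Gamma_succ_diff[of "a + b"] by (simp add: field_simps)
qed

lemma ln_Gamma_increment_ge:
  fixes c b :: real assumes c: "c > 1" and b: "b > 0"
  shows "b * ln (c - 1) \<le> ln (Gamma (c + b)) - ln (Gamma c)"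
proof -
  let ?f = "ln \<circ> Gamma :: real \<Rightarrow> real"
  have "(?f c - ?f (c - 1)) / (c - (c - 1)) \<le> (?f (c + b) - ?f c) / ((c + b) - c)"
    by (rule convex_on_chord_slope_mono[OF log_convex_Gamma_real]) (use c b in auto)
  then show ?thesis
    using c b ln_Gamma_succ_diff[of "c - 1"] by (simp add: field_simps)
qed

lemma Gamma_ratio_le_powr:
  fixes a c b :: real assumes a: "a > 0" and c: "c > 1" and b: "b > 0"
  shows "Gamma (a + b) / Gamma a * (Gamma c / Gamma (c + b)) \<le> ((a + b) / (c - 1)) powr b"
proof -
  have pos: "Gamma a > 0" "Gamma c > 0" "Gamma (a + b) > 0" "Gamma (c + b) > 0"
    using a b c by auto
  have "ln (Gamma (a + b) / Gamma a * (Gamma c / Gamma (c + b)))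
      = (ln (Gamma (a + b)) - ln (Gamma a)) - (ln (Gamma (c + b)) - ln (Gamma c))"
    using pos by (simp add: ln_mult ln_div)
  also have "\<dots> \<le> b * ln (a + b) - b * ln (c - 1)"
    using ln_Gamma_increment_le[OF a b] ln_Gamma_increment_ge[OF c b] by linarith
  also have "\<dots> = ln (((a + b) / (c - 1)) powr b)"
    using a b c by (simp add: ln_powr ln_div algebra_simps)
  finally show ?thesis
    using pos a b c by (subst (asm) ln_le_cancel_iff) auto
qed

definition Gamma_shift_ratio :: "real \<Rightarrow> nat \<Rightarrow> real" where
  "Gamma_shift_ratio \<beta> j = Gamma (real j - \<beta>) / Gamma (real j)"

lemma Gamma_real_of_nat_Suc: "Gamma (real j + 1) = fact j"
  using Gamma_fact[of j] by (simp add: add.commute)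

lemma binomial_mult_Beta_eq_diff:
  fixes \<beta> :: real and k n :: nat
  assumes kb: "real k > \<beta>" and b: "\<beta> > 0" and kn: "k \<le> n"
  shows "real (n choose k) * Beta (real k - \<beta>) (real n + 1 - real k)
     = Gamma (real n + 1) / Gamma (real n + 1 - \<beta>)
       * (Gamma_shift_ratio \<beta> k - Gamma_shift_ratio \<beta> (Suc k)) / \<beta>"
proof -
  have k1: "k \<ge> 1" using kb b by (cases k) auto
  have Gnk: "Gamma (real n + 1 - real k) = fact (n - k)"
    using Gamma_real_of_nat_Suc[of "n - k"] kn by (simp add: of_nat_diff algebra_simps)
  have Gk: "Gamma (real k) = fact (k - 1)"
    using Gamma_real_of_nat_Suc[of "k - 1"] k1 by (simp add: of_nat_diff)
  have GSk: "Gamma (real (Suc k)) = fact k"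
    using Gamma_real_of_nat_Suc[of k] by (simp add: add.commute)
  have GSkb: "Gamma (real (Suc k) - \<beta>) = (real k - \<beta>) * Gamma (real k - \<beta>)"
    using Gamma_real_plus1[of "real k - \<beta>"] kb by (simp add: algebra_simps)
  have fact_k: "fact k = real k * fact (k - 1)"
    using k1 fact_reduce[of k] by simp
  have choose: "real (n choose k) = fact n / (fact k * fact (n - k))"
    using binomial_fact[OF kn] by simp
  have sum_args: "real k - \<beta> + (real n + 1 - real k) = real n + 1 - \<beta>" by simp
  have "Gamma (real n + 1 - \<beta>) > 0" "Gamma (real k - \<beta>) > 0"
    using kb kn by auto
  then show ?thesis
    unfolding Gamma_shift_ratio_def Beta_def Gnk Gamma_real_of_nat_Suc Gk GSk GSkb choose
      sum_args fact_k
    using b k1 by (simp add: field_simps)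
qed

lemma binomial_Beta_sum_eq:
  fixes \<beta> :: real and m n :: nat
  assumes b: "\<beta> > 0" and mb: "real m > \<beta>" and mn: "m \<le> Suc n"
  shows "(\<Sum>k = m..n. real (n choose k) * Beta (real k - \<beta>) (real n + 1 - real k))
     = (Gamma (real n + 1) / Gamma (real n + 1 - \<beta>) * Gamma_shift_ratio \<beta> m - 1) / \<beta>"
proof -
  define Q where "Q = Gamma (real n + 1) / Gamma (real n + 1 - \<beta>)"
  let ?g = "Gamma_shift_ratio \<beta>"
  have "(\<Sum>k = m..n. real (n choose k) * Beta (real k - \<beta>) (real n + 1 - real k))
      = (\<Sum>k = m..n. Q / \<beta> * (?g k - ?g (Suc k)))"
    using mb b by (intro sum.cong refl) (auto simp: binomial_mult_Beta_eq_diff Q_def)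
  also have "\<dots> = Q / \<beta> * (?g m - ?g (Suc n))"
    using sum_Suc_diff[OF mn, of "\<lambda>k. - ?g k"]
    by (simp add: sum_distrib_left[symmetric] del: times_divide_eq_left)
  also have "\<dots> = (Q * ?g m - Q * ?g (Suc n)) / \<beta>"
    by (simp add: right_diff_distrib diff_divide_distrib)
  also have "Q * ?g (Suc n) = 1"
  proof -
    have "real m \<le> real n + 1" using mn by simp
    then have "Gamma (real n + 1 - \<beta>) > 0" "Gamma (real n + 1) > 0"
      using mb b by (intro Gamma_real_pos; linarith)+
    then have "Gamma (real n + 1 - \<beta>) \<noteq> 0" "Gamma (real n + 1) \<noteq> 0"
      by (metis less_irrefl)+
    moreover have "real (Suc n) = real n + 1" by simp
    ultimately show ?thesis
      unfolding Q_def Gamma_shift_ratio_def by (simp only: divide_self_if) simp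
  qed
  finally show ?thesis
    unfolding Q_def .
qed

lemma ln_inverse_powr_le_powr:
  fixes x \<beta> :: real assumes x: "0 < x" "x < 1" and b: "\<beta> > 1"
  shows "ln (1 / x) powr (\<beta> - 1) \<le> x powr (1 - \<beta>)"
proof -
  have "ln (1 / x) powr (\<beta> - 1) \<le> (1 / x) powr (\<beta> - 1)"
    using b x ln_le_minus_one[of "1 / x"] by (intro powr_mono2) auto
  also have "\<dots> = x powr (1 - \<beta>)"
    using x by (simp add: powr_divide powr_minus_divide[symmetric] powr_minus)
  finally show ?thesis .
qed

definition powr_density :: "real \<Rightarrow> real \<Rightarrow> real \<Rightarrow> real" where
  "powr_density C \<beta> x = C * indicator {0<..<1} x * x powr (1 - \<beta>)"

lemma borel_measurable_powr_density [measurable]: "powr_density C \<beta> \<in> borel_measurable borel"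
  unfolding powr_density_def by measurable

lemma measure_le_density_powr_density:
  fixes \<Lambda> :: "real measure" and \<beta> C :: real
  assumes sets_\<Lambda>: "sets \<Lambda> = sets borel"
    and supp: "emeasure \<Lambda> (- {0..1}) = 0"
    and \<beta>: "\<beta> > 1" and C: "C > 0"
    and upper: "\<And>A. A \<in> sets borel \<Longrightarrow> A \<subseteq> {0..1} \<Longrightarrow>
        emeasure \<Lambda> A
          \<le> ennreal C * (\<integral>\<^sup>+ x \<in> A \<inter> {0<..<1}. ennreal (ln (1 / x) powr (\<beta> - 1)) \<partial>lborel)"
  shows "\<Lambda> \<le> density lborel (\<lambda>x. ennreal (powr_density C \<beta> x))"
    (is "_ \<le> ?N")
proof -
  have le: "emeasure \<Lambda> A \<le> emeasure ?N A" for A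
  proof (cases "A \<in> sets borel")
    case False
    then show ?thesis
      using sets_\<Lambda> by (simp add: emeasure_notin_sets)
  next
    case A: True
    have "- {0..1} \<in> null_sets \<Lambda>"
      using supp sets_\<Lambda> by (auto simp: null_sets_def)
    from emeasure_Diff_null_set[OF this, of A]
    have "emeasure \<Lambda> A = emeasure \<Lambda> (A \<inter> {0..1})"
      using A sets_\<Lambda> by (simp add: Diff_eq)
    also have "\<dots> \<le> ennreal C *
        (\<integral>\<^sup>+ x \<in> (A \<inter> {0..1}) \<inter> {0<..<1}. ennreal (ln (1 / x) powr (\<beta> - 1)) \<partial>lborel)"
      using A by (intro upper) auto
    also have "\<dots> = (\<integral>\<^sup>+ x. ennreal C * (ennreal (ln (1 / x) powr (\<beta> - 1))
        * indicator (A \<inter> {0<..<1}) x) \<partial>lborel)"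
      using A by (subst nn_integral_cmult) (auto simp: Int_assoc Int_absorb1 greaterThanLessThan_subseteq_atLeastAtMost_iff)
    also have "\<dots> \<le> (\<integral>\<^sup>+ x. ennreal (powr_density C \<beta> x) * indicator A x \<partial>lborel)"
    proof (intro nn_integral_mono)
      fix x
      show "ennreal C * (ennreal (ln (1 / x) powr (\<beta> - 1)) * indicator (A \<inter> {0<..<1}) x)
          \<le> ennreal (powr_density C \<beta> x) * indicator A x"
      proof (cases "x \<in> A \<and> 0 < x \<and> x < 1")
        case True
        then have "ln (1 / x) powr (\<beta> - 1) \<le> x powr (1 - \<beta>)"
          using ln_inverse_powr_le_powr \<beta> by auto
        then show ?thesis
          using True C
          by (simp add: powr_density_def indicator_def ennreal_mult[symmetric] ennreal_leI)
      qed (auto simp: indicator_def)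
    qed
    also have "\<dots> = emeasure ?N A"
      using A by (subst emeasure_density) (auto intro: measurable_compose[OF borel_measurable_powr_density])
    finally show ?thesis .
  qed
  have "space \<Lambda> = space ?N"
    using sets_eq_imp_space_eq[of \<Lambda> ?N] sets_\<Lambda> by simp
  then show ?thesis
    unfolding le_measure_iff using sets_\<Lambda> le by (auto simp: le_fun_def)
qed

lemma lam_eq_nn_integral:
  assumes sets_\<Lambda>: "sets \<Lambda> = sets borel"
  shows "lam \<Lambda> n k = enn2real (\<integral>\<^sup>+ x. ennreal (indicator {0..1} x * (x ^ (k - 2) * (1 - x) ^ (n - k))) \<partial>\<Lambda>)"
proof -
  have "(\<lambda>x. indicator {0..1} x * (x ^ (k - 2) * (1 - x) ^ (n - k))) \<in> borel_measurable \<Lambda>"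
    unfolding measurable_cong_sets[OF sets_\<Lambda> refl] by measurable
  then show ?thesis
    unfolding lam_def set_lebesgue_integral_def
    by (subst integral_eq_nn_integral) (auto simp: indicator_def)
qed

lemma nn_integral_density_powr_density_Beta:
  fixes \<beta> C :: real and n k :: nat
  assumes C: "C > 0" and k2: "k \<ge> 2" and kb: "real k > \<beta>" and kn: "k \<le> n"
  shows "(\<integral>\<^sup>+ x. ennreal (indicator {0..1} x * (x ^ (k - 2) * (1 - x) ^ (n - k)))
            \<partial>density lborel (\<lambda>x. ennreal (powr_density C \<beta> x)))
       = ennreal (C * Beta (real k - \<beta>) (real n + 1 - real k))"
proof -
  define a where "a = real k - \<beta>"
  define b where "b = real n + 1 - real k"
  have a: "a > 0" and b: "b > 0" using kb kn by (auto simp: a_def b_def)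
  define h where "h = (\<lambda>x::real. C * (x powr (a - 1) * (1 - x) powr (b - 1)))"
  have "(\<integral>\<^sup>+ x. ennreal (indicator {0..1} x * (x ^ (k - 2) * (1 - x) ^ (n - k)))
            \<partial>density lborel (\<lambda>x. ennreal (powr_density C \<beta> x)))
      = (\<integral>\<^sup>+ x. ennreal (powr_density C \<beta> x)
            * ennreal (indicator {0..1} x * (x ^ (k - 2) * (1 - x) ^ (n - k))) \<partial>lborel)"
    by (subst nn_integral_density) (auto intro: measurable_compose[OF borel_measurable_powr_density])
  also have "\<dots> = (\<integral>\<^sup>+ x. ennreal (indicator {0<..<1} x * h x) \<partial>lborel)"
  proof (intro nn_integral_cong)
    fix x :: real
    show "ennreal (powr_density C \<beta> x) * ennreal (indicator {0..1} x * (x ^ (k - 2) * (1 - x) ^ (n - k)))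
        = ennreal (indicator {0<..<1} x * h x)"
    proof (cases "0 < x \<and> x < 1")
      case True
      have "x ^ (k - 2) = x powr (real k - 2)"
        using True k2 by (simp add: powr_realpow[symmetric] of_nat_diff)
      moreover have "(1 - x) ^ (n - k) = (1 - x) powr (b - 1)"
        using True kn by (simp add: powr_realpow[symmetric] of_nat_diff b_def)
      moreover have "x powr (1 - \<beta>) * x powr (real k - 2) = x powr (a - 1)"
        using True by (simp add: powr_add[symmetric] a_def)
      ultimately show ?thesis
        using True C by (simp add: powr_density_def h_def ennreal_mult[symmetric] mult_ac)
    qed (auto simp: indicator_def powr_density_def)
  qed
  also have "\<dots> = ennreal (C * Beta a b)"
  proof (rule nn_integral_has_integral_lebesgue)
    show "0 \<le> h x" if "x \<in> {0<..<1}" for x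
      using that C unfolding h_def by simp
    have "((\<lambda>t. t powr (a - 1) * (1 - t) powr (b - 1)) has_integral Beta a b) {0<..<1}"
      using has_integral_Beta_real[OF a b] by (simp add: has_integral_Icc_iff_Ioo)
    then show "(h has_integral C * Beta a b) {0<..<1}"
      unfolding h_def by (rule has_integral_mult_right)
  qed
  finally show ?thesis
    by (simp add: a_def b_def)
qed

lemma lam_le_Beta:
  fixes \<Lambda> :: "real measure" and \<beta> C :: real and n k :: nat
  assumes sets_\<Lambda>: "sets \<Lambda> = sets borel"
    and le: "\<Lambda> \<le> density lborel (\<lambda>x. ennreal (powr_density C \<beta> x))"
    and \<beta>: "\<beta> \<ge> 1" and C: "C > 0" and kb: "real k > \<beta>" and kn: "k \<le> n"
  shows "lam \<Lambda> n k \<le> C * Beta (real k - \<beta>) (real n + 1 - real k)"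
proof -
  let ?f = "\<lambda>x. ennreal (indicator {0..1} x * (x ^ (k - 2) * (1 - x) ^ (n - k)))"
  have "(\<integral>\<^sup>+ x. ?f x \<partial>\<Lambda>) \<le> (\<integral>\<^sup>+ x. ?f x \<partial>density lborel (\<lambda>x. ennreal (powr_density C \<beta> x)))"
    using le sets_\<Lambda> by (intro nn_integral_mono_measure) auto
  also have "\<dots> = ennreal (C * Beta (real k - \<beta>) (real n + 1 - real k))"
    using kb \<beta> by (intro nn_integral_density_powr_density_Beta C kn) auto
  finally have "enn2real (\<integral>\<^sup>+ x. ?f x \<partial>\<Lambda>) \<le> C * Beta (real k - \<beta>) (real n + 1 - real k)"
    using C kb kn by (intro enn2real_leI) (auto simp: Beta_def)
  then show ?thesis
    using lam_eq_nn_integral[OF sets_\<Lambda>] by simp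
qed

lemma binomial_lam_tail_le:
  fixes \<Lambda> :: "real measure" and \<beta> C :: real and m n :: nat
  assumes sets_\<Lambda>: "sets \<Lambda> = sets borel"
    and le: "\<Lambda> \<le> density lborel (\<lambda>x. ennreal (powr_density C \<beta> x))"
    and \<beta>: "\<beta> \<ge> 1" and C: "C > 0" and mb: "real m > \<beta> + 1" and mn: "m \<le> Suc n"
  shows "(\<Sum>k = m..n. real (n choose k) * lam \<Lambda> n k)
           \<le> C / \<beta> * (((real n + 1) / (real m - \<beta> - 1)) powr \<beta> - 1)"
proof -
  have "real m \<le> real n + 1" using mn by simp
  have "(\<Sum>k = m..n. real (n choose k) * lam \<Lambda> n k)
      \<le> (\<Sum>k = m..n. real (n choose k) * (C * Beta (real k - \<beta>) (real n + 1 - real k)))"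
    using mb by (intro sum_mono mult_left_mono lam_le_Beta[OF sets_\<Lambda> le \<beta> C]) auto
  also have "\<dots> = C / \<beta> * (Gamma (real n + 1) / Gamma (real n + 1 - \<beta>) * Gamma_shift_ratio \<beta> m - 1)"
    using binomial_Beta_sum_eq[of \<beta> m n] \<beta> mb mn
    by (simp add: sum_distrib_left[symmetric] mult.left_commute)
  also have "\<dots> \<le> C / \<beta> * (((real n + 1) / (real m - \<beta> - 1)) powr \<beta> - 1)"
  proof -
    have "Gamma (real n + 1) / Gamma (real n + 1 - \<beta>) * Gamma_shift_ratio \<beta> m
        \<le> ((real n + 1) / (real m - \<beta> - 1)) powr \<beta>"
      using Gamma_ratio_le_powr[of "real n + 1 - \<beta>" "real m - \<beta>" \<beta>] mb \<open>real m \<le> real n + 1\<close> \<beta>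
      unfolding Gamma_shift_ratio_def by (simp add: algebra_simps)
    then show ?thesis
      using C \<beta> by (intro mult_left_mono) auto
  qed
  finally show ?thesis .
qed

lemma binomial_lam_floor_tail_le:
  fixes \<Lambda> :: "real measure" and \<beta> C \<delta> B :: real and n :: nat
  assumes sets_\<Lambda>: "sets \<Lambda> = sets borel"
    and le: "\<Lambda> \<le> density lborel (\<lambda>x. ennreal (powr_density C \<beta> x))"
    and \<beta>: "\<beta> \<ge> 1" and C: "C > 0" and \<delta>: "0 < \<delta>" "\<delta> \<le> 1"
    and large: "\<delta> * real n > \<beta> + 1"
    and bound: "((real n + 1) / (\<delta> * real n - \<beta> - 1)) powr \<beta> \<le> B + 1"
  shows "(\<Sum>k = nat \<lfloor>\<delta> * real n\<rfloor> + 1..n. real (n choose k) * lam \<Lambda> n k) \<le> C / \<beta> * B"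
proof -
  define m where "m = nat \<lfloor>\<delta> * real n\<rfloor> + 1"
  have "0 \<le> \<delta> * real n" and "\<delta> * real n \<le> real n"
    using \<delta> by (auto simp: mult_left_le_one_le)
  then have "real m = real_of_int \<lfloor>\<delta> * real n\<rfloor> + 1"
    unfolding m_def by simp
  then have m_gt: "real m > \<delta> * real n"
    using real_of_int_floor_add_one_gt[of "\<delta> * real n"] by linarith
  have "\<lfloor>\<delta> * real n\<rfloor> \<le> \<lfloor>real n\<rfloor>"
    using \<open>\<delta> * real n \<le> real n\<close> by (rule floor_mono)
  then have m_le: "m \<le> Suc n"
    unfolding m_def by (simp add: nat_le_iff)
  have "(\<Sum>k = m..n. real (n choose k) * lam \<Lambda> n k)
      \<le> C / \<beta> * (((real n + 1) / (real m - \<beta> - 1)) powr \<beta> - 1)"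
    using m_gt large by (intro binomial_lam_tail_le[OF sets_\<Lambda> le \<beta> C _ m_le]) auto
  also have "\<dots> \<le> C / \<beta> * B"
  proof -
    have "((real n + 1) / (real m - \<beta> - 1)) powr \<beta> \<le> ((real n + 1) / (\<delta> * real n - \<beta> - 1)) powr \<beta>"
      using m_gt large \<beta> by (intro powr_mono2 divide_left_mono mult_pos_pos) auto
    then show ?thesis
      using bound C \<beta> by (intro mult_left_mono) auto
  qed
  finally show ?thesis
    by (simp add: m_def)
qed

theorem proposition3p7:
  fixes \<Lambda> :: "real measure" and \<beta> C1 C2 \<delta> :: real
  assumes sets_\<Lambda>: "sets \<Lambda> = sets borel"
    and fin: "finite_measure \<Lambda>"
    and supp: "emeasure \<Lambda> (- {0..1}) = 0"
    and \<beta>: "\<beta> > 1" and C1: "C1 > 0" and C2: "C2 > 0"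
    and lower: "\<And>A. A \<in> sets borel \<Longrightarrow> A \<subseteq> {0..1} \<Longrightarrow>
        ennreal C1 * (\<integral>\<^sup>+ x \<in> A \<inter> {0<..<1}. ennreal (ln (1 / x) powr (\<beta> - 1)) \<partial>lborel)
          \<le> emeasure \<Lambda> A"
    and upper: "\<And>A. A \<in> sets borel \<Longrightarrow> A \<subseteq> {0..1} \<Longrightarrow>
        emeasure \<Lambda> A
          \<le> ennreal C2 * (\<integral>\<^sup>+ x \<in> A \<inter> {0<..<1}. ennreal (ln (1 / x) powr (\<beta> - 1)) \<partial>lborel)"
    and \<delta>: "0 < \<delta>" "\<delta> < 1"
  shows "\<exists>K. \<forall>\<^sub>F n in sequentially.
           (\<Sum>k = nat \<lfloor>\<delta> * real n\<rfloor> + 1..n. real (n choose k) * lam \<Lambda> n k)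
             \<le> C2 / \<beta> * \<delta> powr (- \<beta>) + K / real n"
proof (intro exI[of _ 0])
  have dominated: "\<Lambda> \<le> density lborel (\<lambda>x. ennreal (powr_density C2 \<beta> x))"
    by (rule measure_le_density_powr_density[OF sets_\<Lambda> supp \<beta> C2 upper])
  have "(\<lambda>n. ((real n + 1) / (\<delta> * real n - \<beta> - 1)) powr \<beta>) \<longlonglongrightarrow> inverse \<delta> powr \<beta>"
    using \<delta> by real_asymp
  also have "inverse \<delta> powr \<beta> = \<delta> powr (- \<beta>)"
    using \<delta> by (simp add: powr_minus inverse_powr)
  finally have "\<forall>\<^sub>F n in sequentially. ((real n + 1) / (\<delta> * real n - \<beta> - 1)) powr \<beta> < \<delta> powr (- \<beta>) + 1"
    by (rule order_tendstoD) simp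
  moreover have "\<forall>\<^sub>F n in sequentially. \<delta> * real n > \<beta> + 1"
    using \<delta> by real_asymp
  ultimately show "\<forall>\<^sub>F n in sequentially.
           (\<Sum>k = nat \<lfloor>\<delta> * real n\<rfloor> + 1..n. real (n choose k) * lam \<Lambda> n k)
             \<le> C2 / \<beta> * \<delta> powr (- \<beta>) + 0 / real n"
  proof eventually_elim
    case (elim n)
    then show ?case
      using binomial_lam_floor_tail_le[OF sets_\<Lambda> dominated _ C2 \<delta>(1), of n "\<delta> powr (- \<beta>)"] \<beta> \<delta>(2)
      by simp
  qed
qed

end
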